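(* As formal power series, $$\sum_{M\geq1}g(M)x^M=\frac{x-x^3}{(1-x-x^2)^2},\qquad \sum_{M\geq1}h(M)x^M=\frac{x-x^2}{(1-x-x^2)^2},$$ $$\sum_{M\geq1}g_1(M)x^M=\frac{x^2}{(1-x-x^2)^2}=\sum_{M\geq1}h_1(M)x^M.$$ In particular $g_1(M)=h_1(M)$ for all $M\geq1$.
   Context: The perimeter of a nonempty partition $\lambda$ with largest part $\lambda_1$ and $\ell(\lambda)$ parts is $\lambda_1+\ell(\lambda)-1$. $\mathcal G(M)$ is the set of partitions into odd parts with perimeter $M$, $\mathcal H(M)$ the set of partitions into distinct parts with perimeter $M$; $g(M)$ (resp. $h(M)$) is the total number of parts, summed over all partitions in $\mathcal G(M)$ (resp. $\mathcal H(M)$). $\mathcal G_1(M)$ is the set of partitions with perimeter $M$ in which exactly one distinct even integer occurs as a part (possibly with multiplicity greater than one) and all other parts are odd; $\mathcal H_1(M)$ is the set of partitions with perimeter $M$ in which exactly one part value occurs at least twice and every other part value occurs exactly once. $g_1(M)=|\mathcal G_1(M)|$, $h_1(M)=|\mathcal H_1(M)|$. *)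

theory Defs
  imports "HOL-Library.Multiset" "HOL-Computational_Algebra.Formal_Power_Series"
begin

definition is_partition :: "nat multiset \<Rightarrow> bool" where
  "is_partition p \<longleftrightarrow> (\<forall>x \<in># p. 0 < x)"

definition perimeter :: "nat multiset \<Rightarrow> nat" where
  "perimeter p = Max (set_mset p) + size p - 1"

definition partitions_perim :: "nat \<Rightarrow> nat multiset set" where
  "partitions_perim M = {p. is_partition p \<and> p \<noteq> {#} \<and> perimeter p = M}"

definition G_set :: "nat \<Rightarrow> nat multiset set" where
  "G_set M = {p \<in> partitions_perim M. \<forall>x \<in># p. odd x}"

definition H_set :: "nat \<Rightarrow> nat multiset set" where
  "H_set M = {p \<in> partitions_perim M. \<forall>x \<in># p. count p x = 1}"

definition g :: "nat \<Rightarrow> nat" where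
  "g M = (\<Sum>p \<in> G_set M. size p)"

definition h :: "nat \<Rightarrow> nat" where
  "h M = (\<Sum>p \<in> H_set M. size p)"

definition G1_set :: "nat \<Rightarrow> nat multiset set" where
  "G1_set M = {p \<in> partitions_perim M. card {x \<in> set_mset p. even x} = 1}"

definition H1_set :: "nat \<Rightarrow> nat multiset set" where
  "H1_set M = {p \<in> partitions_perim M. card {x \<in> set_mset p. 2 \<le> count p x} = 1}"

definition g1 :: "nat \<Rightarrow> nat" where "g1 M = card (G1_set M)"
definition h1 :: "nat \<Rightarrow> nat" where "h1 M = card (H1_set M)"

end

theory Submission
  imports Defs
begin

text \<open>
  Removing one copy of the largest part \<open>m\<close> from a partition of perimeter \<open>M\<close> leaves a
  partition with parts at most \<open>m\<close> and exactly \<open>M - m\<close> parts. Hence the perimeter generating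
  function of a class is \<open>\<Sum>\<^sub>m x\<^sup>m Q\<^sub>m(x)\<close>, where \<open>Q\<^sub>m\<close> counts the admissible
  remainders by their number of parts, and weighting by the number of parts amounts to applying
  \<open>1 + x d/dx\<close> to \<open>Q\<^sub>m\<close>. For the four classes \<open>Q\<^sub>m\<close> is a sum of products of the factors
  \<open>1/(1 - x)\<close>, \<open>1 + x\<close> and \<open>x\<close>, and the sum over \<open>m\<close> becomes a geometric series
  \<open>\<Sum>\<^sub>j u\<^sup>j (A + (j + 1) B)\<close>, with \<open>u = x\<^sup>2/(1 - x)\<close> for the classes restricted by parity and
  \<open>u = x(1 + x)\<close> for those restricted by multiplicity. In both cases \<open>1 - u\<close> is
  \<open>1 - x - x\<^sup>2\<close> up to a unit, which produces the common denominator.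
\<close>

unbundle fps_syntax

section \<open>Sums of power series of increasing order\<close>

text \<open>
  \<open>fps_series V\<close> is the sum \<open>\<Sum>\<^sub>m V m\<close> provided \<open>V m\<close> has order at least \<open>m\<close>; the
  coefficientwise definition needs no topology, but without that hypothesis it silently truncates.
\<close>

definition fps_series :: "(nat \<Rightarrow> 'a::comm_monoid_add fps) \<Rightarrow> 'a fps" where
  "fps_series V = Abs_fps (\<lambda>n. \<Sum>m\<le>n. V m $ n)"

lemma fps_series_nth: "fps_series V $ n = (\<Sum>m\<le>n. V m $ n)"
  by (simp add: fps_series_def)

lemma fps_series_add: "fps_series (\<lambda>j. V j + W j) = fps_series V + fps_series W"
  by (simp add: fps_eq_iff fps_series_nth sum.distrib)

lemma fps_power_mult_nth_eq_0:
  fixes u :: "'a::comm_semiring_1 fps"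
  assumes "u $ 0 = 0" "n < m"
  shows "(u ^ m * A) $ n = 0"
proof -
  have "(u ^ m * A) $ n = (\<Sum>i=0..n. (u ^ m) $ i * A $ (n - i))" by (simp add: fps_mult_nth)
  also have "\<dots> = 0"
    using startsby_zero_power_prefix[OF assms(1), of m] assms(2) by (intro sum.neutral) auto
  finally show ?thesis .
qed

lemma fps_series_mult_left:
  fixes V :: "nat \<Rightarrow> 'a::comm_semiring_1 fps"
  assumes "\<And>m n. n < m \<Longrightarrow> V m $ n = 0"
  shows "c * fps_series V = fps_series (\<lambda>j. c * V j)"
proof (rule fps_ext)
  fix n
  have "(c * fps_series V) $ n = (\<Sum>i=0..n. c $ i * (\<Sum>m\<le>n - i. V m $ (n - i)))"
    by (simp add: fps_mult_nth fps_series_nth)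
  also have "\<dots> = (\<Sum>i=0..n. c $ i * (\<Sum>m\<le>n. V m $ (n - i)))"
    by (intro sum.cong refl arg_cong[where f="(*) _"] sum.mono_neutral_left) (auto simp: assms)
  also have "\<dots> = (\<Sum>m\<le>n. \<Sum>i=0..n. c $ i * V m $ (n - i))"
    by (simp add: sum_distrib_left sum.swap[where A="{0..n}"])
  also have "\<dots> = fps_series (\<lambda>j. c * V j) $ n"
    by (simp add: fps_series_nth fps_mult_nth)
  finally show "(c * fps_series V) $ n = fps_series (\<lambda>j. c * V j) $ n" .
qed

lemma fps_series_pairs:
  assumes "\<And>m n. n < m \<Longrightarrow> V m $ n = 0"
  shows "fps_series V = fps_series (\<lambda>k. V (2 * k) + V (2 * k + 1))"
proof (rule fps_ext)
  fix n
  have "fps_series V $ n = (\<Sum>m\<le>Suc (2 * n). V m $ n)"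
    unfolding fps_series_nth by (rule sum.mono_neutral_left) (auto simp: assms)
  also have "\<dots> = fps_series (\<lambda>k. V (2 * k) + V (2 * k + 1)) $ n"
    unfolding sum.in_pairs_0 by (simp add: fps_series_nth)
  finally show "fps_series V $ n = fps_series (\<lambda>k. V (2 * k) + V (2 * k + 1)) $ n" .
qed

lemma fps_series_geometric:
  fixes u :: "'a::comm_ring_1 fps"
  assumes u: "u $ 0 = 0"
  shows "fps_series (\<lambda>j. u ^ j * A) * (1 - u) = A"
proof -
  have "u * fps_series (\<lambda>j. u ^ j * A) = fps_series (\<lambda>j. u ^ Suc j * A)"
    by (subst fps_series_mult_left) (simp_all add: fps_power_mult_nth_eq_0[OF u] mult.assoc)
  then have "fps_series (\<lambda>j. u ^ j * A) * (1 - u)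
      = fps_series (\<lambda>j. u ^ j * A) - fps_series (\<lambda>j. u ^ Suc j * A)"
    by (simp add: algebra_simps)
  also have "\<dots> = A"
  proof (rule fps_ext)
    fix n
    have "(fps_series (\<lambda>j. u ^ j * A) - fps_series (\<lambda>j. u ^ Suc j * A)) $ n
        = (\<Sum>m\<le>n. (u ^ m * A) $ n - (u ^ Suc m * A) $ n)"
      by (simp add: fps_series_nth sum_subtractf)
    also have "\<dots> = A $ n"
      using sum_telescope[of "\<lambda>m. (u ^ m * A) $ n" n] fps_power_mult_nth_eq_0[OF u, of n "Suc n" A]
      by simp
    finally show "(fps_series (\<lambda>j. u ^ j * A) - fps_series (\<lambda>j. u ^ Suc j * A)) $ n = A $ n" .
  qed
  finally show ?thesis .
qed

lemma fps_series_geometric_deriv: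
  fixes u :: "'a::comm_ring_1 fps"
  assumes u: "u $ 0 = 0"
  shows "fps_series (\<lambda>j. of_nat (Suc j) * (u ^ j * A)) * (1 - u) ^ 2 = A"
proof -
  let ?a = "\<lambda>m n. (u ^ m * A) $ n"
  have "(of_nat (Suc m) * (u ^ m * A)) $ n = 0" if "n < m" for m n
    using fps_power_mult_nth_eq_0[OF u that, of "of_nat (Suc m) * A"] by (simp add: mult_ac)
  then have "u * fps_series (\<lambda>j. of_nat (Suc j) * (u ^ j * A))
      = fps_series (\<lambda>j. of_nat (Suc j) * (u ^ Suc j * A))"
    by (subst fps_series_mult_left) (simp_all add: mult_ac)
  then have "fps_series (\<lambda>j. of_nat (Suc j) * (u ^ j * A)) * (1 - u)
      = fps_series (\<lambda>j. of_nat (Suc j) * (u ^ j * A))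
        - fps_series (\<lambda>j. of_nat (Suc j) * (u ^ Suc j * A))"
    by (simp add: algebra_simps)
  also have "\<dots> = fps_series (\<lambda>j. u ^ j * A)"
  proof (rule fps_ext)
    fix n
    have "(fps_series (\<lambda>j. of_nat (Suc j) * (u ^ j * A))
          - fps_series (\<lambda>j. of_nat (Suc j) * (u ^ Suc j * A))) $ n
        = (\<Sum>m\<le>n. of_nat (Suc m) * ?a m n - of_nat (Suc m) * ?a (Suc m) n)"
      by (simp add: fps_series_nth sum_subtractf fps_mult_left_const_nth flip: fps_of_nat)
    also have "\<dots> = (\<Sum>m\<le>n. ?a m n + (of_nat m * ?a m n - of_nat (Suc m) * ?a (Suc m) n))"
      by (rule sum.cong) (auto simp: algebra_simps)
    also have "\<dots> = (\<Sum>m\<le>n. ?a m n)"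
        using sum_telescope[of "\<lambda>m. of_nat m * ?a m n" n]
        fps_power_mult_nth_eq_0[OF u, of n "Suc n" A]
      by (simp add: sum.distrib)
    finally show "(fps_series (\<lambda>j. of_nat (Suc j) * (u ^ j * A))
          - fps_series (\<lambda>j. of_nat (Suc j) * (u ^ Suc j * A))) $ n
        = fps_series (\<lambda>j. u ^ j * A) $ n"
      by (simp add: fps_series_nth)
  qed
  finally show ?thesis
    using fps_series_geometric[OF u, of A] by (simp add: power2_eq_square flip: mult.assoc)
qed

lemma fps_series_geometric_affine:
  fixes u :: "'a::comm_ring_1 fps"
  assumes u: "u $ 0 = 0"
  shows "fps_series (\<lambda>j. u ^ j * A + of_nat (Suc j) * (u ^ j * B)) * (1 - u) ^ 2 = A * (1 - u) + B"
proof -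
  have "fps_series (\<lambda>j. u ^ j * A + of_nat (Suc j) * (u ^ j * B)) * (1 - u) ^ 2
      = (fps_series (\<lambda>j. u ^ j * A) * (1 - u)) * (1 - u)
        + fps_series (\<lambda>j. of_nat (Suc j) * (u ^ j * B)) * (1 - u) ^ 2"
    by (simp add: fps_series_add power2_eq_square algebra_simps)
  then show ?thesis
    using fps_series_geometric[OF u, of A] fps_series_geometric_deriv[OF u, of B] by simp
qed

section \<open>Multisets with prescribed multiplicities\<close>

definition msets_with_mult :: "(nat \<Rightarrow> nat set) \<Rightarrow> nat \<Rightarrow> nat multiset set" where
  "msets_with_mult F m = {q. \<forall>v. count q v \<in> (if v \<in> {1..m} then F v else {0})}"

definition size_gf :: "nat multiset set \<Rightarrow> 'a::comm_semiring_1 fps" where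
  "size_gf S = Abs_fps (\<lambda>n. of_nat (card {q \<in> S. size q = n}))"

definition indicator_fps :: "nat set \<Rightarrow> 'a::comm_semiring_1 fps" where
  "indicator_fps C = Abs_fps (\<lambda>c. of_bool (c \<in> C))"

definition ones_fps :: "'a::comm_semiring_1 fps" where
  "ones_fps = Abs_fps (\<lambda>_. 1)"

lemma mem_msets_with_mult:
  "q \<in> msets_with_mult F m \<longleftrightarrow> (\<forall>v\<in>#q. 1 \<le> v \<and> v \<le> m) \<and> (\<forall>v\<in>{1..m}. count q v \<in> F v)"
  unfolding msets_with_mult_def mem_Collect_eq
  by (metis atLeastAtMost_iff count_eq_zero_iff singletonD singletonI)

lemma msets_with_mult_0: "msets_with_mult F 0 = {{#}}"
  by (auto simp: msets_with_mult_def multiset_eq_iff)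

lemma msets_with_mult_Suc_size:
  "{q \<in> msets_with_mult F (Suc m). size q = n} = (\<lambda>(c, q). q + replicate_mset c (Suc m)) `
     (SIGMA c:{c. c \<le> n \<and> c \<in> F (Suc m)}. {q \<in> msets_with_mult F m. size q = n - c})"
  (is "?L = ?R")
proof
  show "?L \<subseteq> ?R"
  proof
    fix q assume q: "q \<in> ?L"
    define c where "c = count q (Suc m)"
    define q' where "q' = filter_mset (\<lambda>x. x \<noteq> Suc m) q"
    have q_eq: "q = q' + replicate_mset c (Suc m)"
      by (auto simp: multiset_eq_iff q'_def c_def count_replicate_mset)
    have "q' \<in> msets_with_mult F m" "c \<in> F (Suc m)"
      using q by (auto simp: mem_msets_with_mult q'_def c_def)
    moreover have "size q = size q' + c" by (subst q_eq) simp
    ultimately show "q \<in> ?R" using q q_eq by (intro image_eqI[of _ _ "(c, q')"]) auto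
  qed
next
  show "?R \<subseteq> ?L"
  proof
    fix x assume "x \<in> ?R"
    then obtain c q where x: "x = q + replicate_mset c (Suc m)" and c: "c \<le> n" "c \<in> F (Suc m)"
      and q: "q \<in> msets_with_mult F m" "size q = n - c" by auto
    have q_count: "count q v \<in> (if v \<in> {1..m} then F v else {0})" for v
      using q(1) by (simp add: msets_with_mult_def)
    have "count x v \<in> (if v \<in> {1..Suc m} then F v else {0})" for v
      using q_count[of v] q_count[of "Suc m"] c
      by (cases "v = Suc m") (auto simp: x count_replicate_mset)
    then have "x \<in> msets_with_mult F (Suc m)" by (simp add: msets_with_mult_def)
    then show "x \<in> ?L" using x q c by auto
  qed
qed

lemma inj_on_add_replicate_msets_with_mult:
  "inj_on (\<lambda>(c, q). q + replicate_mset c (Suc m))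
     (SIGMA c:C. {q \<in> msets_with_mult F m. size q = n - c})"
proof (rule inj_onI, clarify)
  fix c q c' q'
  assume q: "q \<in> msets_with_mult F m" and q': "q' \<in> msets_with_mult F m"
    and eq: "q + replicate_mset c (Suc m) = q' + replicate_mset c' (Suc m)"
  have "count q (Suc m) = 0" "count q' (Suc m) = 0"
    using q q' by (auto simp: msets_with_mult_def dest!: spec[of _ "Suc m"])
  with arg_cong[OF eq, of "\<lambda>x. count x (Suc m)"] have "c = c'" by simp
  with eq show "c = c' \<and> q = q'" by simp
qed

lemma finite_msets_with_mult_size: "finite {q \<in> msets_with_mult F m. size q = n}"
proof (induction m arbitrary: n)
  case 0
  show ?case by (simp add: msets_with_mult_0)
next
  case (Suc m)
  then show ?case unfolding msets_with_mult_Suc_size by (intro finite_imageI finite_SigmaI) auto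
qed

lemma card_msets_with_mult_Suc_size:
  "card {q \<in> msets_with_mult F (Suc m). size q = n}
     = (\<Sum>c\<in>{c. c \<le> n \<and> c \<in> F (Suc m)}. card {q \<in> msets_with_mult F m. size q = n - c})"
  unfolding msets_with_mult_Suc_size
  by (subst card_image[OF inj_on_add_replicate_msets_with_mult], subst card_SigmaI)
    (auto simp: finite_msets_with_mult_size)

lemma size_gf_msets_with_mult:
  "size_gf (msets_with_mult F m) = (\<Prod>v\<in>{1..m}. indicator_fps (F v) :: 'a::comm_semiring_1 fps)"
proof (induction m)
  case 0
  show ?case by (simp add: fps_eq_iff size_gf_def msets_with_mult_0 Collect_conv_if)
next
  case (Suc m)
  let ?N = "\<lambda>i. of_nat (card {q \<in> msets_with_mult F m. size q = i}) :: 'a"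
  have "size_gf (msets_with_mult F (Suc m)) = (indicator_fps (F (Suc m)) :: 'a fps)
      * size_gf (msets_with_mult F m)"
  proof (rule fps_ext)
    fix n
    have "size_gf (msets_with_mult F (Suc m)) $ n = (\<Sum>i\<in>{c. c \<le> n \<and> c \<in> F (Suc m)}. ?N (n - i))"
      by (simp add: size_gf_def card_msets_with_mult_Suc_size)
    also have "\<dots> = (\<Sum>i=0..n. of_bool (i \<in> F (Suc m)) * ?N (n - i))"
      by (rule sum.mono_neutral_cong_left) auto
    also have "\<dots> = (indicator_fps (F (Suc m)) * size_gf (msets_with_mult F m)) $ n"
      by (simp add: fps_mult_nth indicator_fps_def size_gf_def)
    finally show "size_gf (msets_with_mult F (Suc m)) $ n
        = (indicator_fps (F (Suc m)) * size_gf (msets_with_mult F m) :: 'a fps) $ n" .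
  qed
  then show ?case using Suc.IH by (simp add: prod.nat_ivl_Suc' mult.commute)
qed

lemma size_gf_UN_disjoint:
  assumes "finite I" "\<And>i j. i \<in> I \<Longrightarrow> j \<in> I \<Longrightarrow> i \<noteq> j \<Longrightarrow> S i \<inter> S j = {}"
    "\<And>i n. i \<in> I \<Longrightarrow> finite {q \<in> S i. size q = n}"
  shows "size_gf (\<Union>i\<in>I. S i) = (\<Sum>i\<in>I. size_gf (S i))"
proof (rule fps_ext)
  fix n
  have "{q \<in> (\<Union>i\<in>I. S i). size q = n} = (\<Union>i\<in>I. {q \<in> S i. size q = n})" by auto
  then have "card {q \<in> (\<Union>i\<in>I. S i). size q = n} = (\<Sum>i\<in>I. card {q \<in> S i. size q = n})"
    using assms by (simp add: card_UN_disjoint disjoint_iff)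
  then show "size_gf (\<Union>i\<in>I. S i) $ n = (\<Sum>i\<in>I. size_gf (S i)) $ n"
    by (simp add: size_gf_def fps_sum_nth)
qed

lemma size_gf_empty: "size_gf {} = 0"
  by (simp add: size_gf_def fps_eq_iff)

lemma indicator_fps_UNIV: "indicator_fps UNIV = ones_fps"
  by (simp add: indicator_fps_def ones_fps_def)

lemma indicator_fps_0: "indicator_fps {0} = 1"
  by (auto simp: indicator_fps_def fps_eq_iff)

lemma indicator_fps_01: "indicator_fps {0, 1} = 1 + fps_X"
  by (auto simp: indicator_fps_def fps_eq_iff fps_X_def)

lemma indicator_fps_atLeast: "indicator_fps {c. k \<le> c} = fps_X ^ k * ones_fps"
  by (auto simp: indicator_fps_def fps_eq_iff ones_fps_def fps_X_power_mult_nth)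

lemma ones_fps_times_one_minus_X: "ones_fps * (1 - fps_X) = (1 :: 'a::comm_ring_1 fps)"
  by (simp add: fps_eq_iff ones_fps_def algebra_simps)

lemma fps_deriv_ones_fps: "fps_deriv ones_fps = (ones_fps ^ 2 :: 'a::comm_ring_1 fps)"
  by (simp add: fps_eq_iff ones_fps_def power2_eq_square fps_mult_nth)

lemma prod_if_odd: "(\<Prod>v\<in>{1..m}. if odd v then a else 1) = a ^ ((m + 1) div 2)"
proof (induction m)
  case (Suc m)
  then show ?case
    by (cases "odd m") (simp_all add: prod.nat_ivl_Suc' mult.commute)
qed simp

lemma card_even_atLeastAtMost_odd: "card {e \<in> {1..2 * k + 1}. even e} = k"
proof -
  have "{e \<in> {1..2 * k + 1}. even e} = (\<lambda>i. 2 * Suc i) ` {..<k}"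
  proof (intro set_eqI iffI)
    fix e assume "e \<in> {e \<in> {1..2 * k + 1}. even e}"
    then obtain j where "e = 2 * j" "0 < j" "j \<le> k" by (auto elim!: evenE)
    then show "e \<in> (\<lambda>i. 2 * Suc i) ` {..<k}"
      by (intro image_eqI[of _ _ "j - 1"]) auto
  qed auto
  then show ?thesis by (simp add: card_image inj_on_def)
qed

section \<open>Removing the largest part\<close>

text \<open>
  The partitions with largest part \<open>m\<close> satisfying \<open>P\<close> are exactly the \<open>add_mset m q\<close> with
  \<open>q \<in> below_max P m\<close>, and such a partition has perimeter \<open>m + size q\<close>.
\<close>

definition below_max :: "(nat multiset \<Rightarrow> bool) \<Rightarrow> nat \<Rightarrow> nat multiset set" where
  "below_max P m = {q. (\<forall>v\<in>#q. 0 < v \<and> v \<le> m) \<and> P (add_mset m q)}"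

lemma below_max_subset_msets_with_mult: "below_max P m \<subseteq> msets_with_mult (\<lambda>_. UNIV) m"
  by (auto simp: below_max_def mem_msets_with_mult Suc_le_eq)

lemma finite_below_max_size: "finite {q \<in> below_max P m. size q = n}"
  using below_max_subset_msets_with_mult
  by (blast intro: finite_subset[OF _ finite_msets_with_mult_size])

lemma Max_add_mset_below_max: "q \<in> below_max P m \<Longrightarrow> Max (set_mset (add_mset m q)) = m"
  by (intro Max_eqI) (auto simp: below_max_def)

lemma partitions_perim_by_max:
  "{p \<in> partitions_perim M. P p} = (\<Union>m\<in>{1..M}. add_mset m ` {q \<in> below_max P m. size q = M - m})"
  (is "?L = ?R")
proof
  show "?L \<subseteq> ?R"
  proof
    fix p assume p: "p \<in> ?L"
    define m where "m = Max (set_mset p)"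
    have p_props: "p \<noteq> {#}" "\<forall>x\<in>#p. 0 < x" "m + size p - 1 = M" "P p"
      using p by (auto simp: partitions_perim_def is_partition_def perimeter_def m_def)
    have m: "m \<in># p" "\<forall>x\<in>#p. x \<le> m"
      using p_props(1) by (auto simp: m_def)
    have "size p \<noteq> 0" using p_props(1) by simp
    then have "m \<le> M" "size (p - {#m#}) = M - m"
      using p_props(3) size_Diff_singleton[OF m(1)] by linarith+
    with p_props m show "p \<in> ?R"
      by (intro UN_I[of m] image_eqI[of _ _ "p - {#m#}"])
        (auto simp: below_max_def dest: in_diffD)
  qed
next
  show "?R \<subseteq> ?L"
  proof
    fix p assume "p \<in> ?R"
    then obtain m q where "m \<in> {1..M}" "q \<in> below_max P m" "size q = M - m" "p = add_mset m q"
      by blast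
    then show "p \<in> ?L"
      using Max_add_mset_below_max[of q P m]
      by (auto simp: partitions_perim_def is_partition_def perimeter_def below_max_def)
  qed
qed

lemma sum_partitions_perim_size:
  "(\<Sum>p\<in>{p \<in> partitions_perim M. P p}. w (size p))
     = (\<Sum>m\<in>{1..M}. w (Suc (M - m)) * card {q \<in> below_max P m. size q = M - m})"
proof -
  have disjoint: "add_mset i ` {q \<in> below_max P i. size q = M - i}
      \<inter> add_mset j ` {q \<in> below_max P j. size q = M - j} = {}" if "i \<noteq> j" for i j
  proof -
    have "add_mset i q \<noteq> add_mset j q'" if "q \<in> below_max P i" "q' \<in> below_max P j" for q q'
      using Max_add_mset_below_max[OF that(1)] Max_add_mset_below_max[OF that(2)] \<open>i \<noteq> j\<close>
      by metis
    then show ?thesis by blast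
  qed
  have "(\<Sum>p\<in>{p \<in> partitions_perim M. P p}. w (size p))
      = (\<Sum>m\<in>{1..M}. \<Sum>p\<in>add_mset m ` {q \<in> below_max P m. size q = M - m}. w (size p))"
    unfolding partitions_perim_by_max
    by (rule sum.UNION_disjoint) (auto simp: finite_below_max_size disjoint)
  also have "\<dots> = (\<Sum>m\<in>{1..M}. w (Suc (M - m)) * card {q \<in> below_max P m. size q = M - m})"
    by (intro sum.cong refl, subst sum.reindex) (auto simp: inj_on_def)
  finally show ?thesis .
qed

lemma fps_series_X_power_nth:
  "fps_series (\<lambda>j. fps_X ^ Suc j * A (Suc j)) $ M = (\<Sum>m\<in>{1..M}. (fps_X ^ m * A m) $ M)"
proof -
  have "fps_series (\<lambda>j. fps_X ^ Suc j * A (Suc j)) $ M = (\<Sum>m\<in>{1..Suc M}. (fps_X ^ m * A m) $ M)"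
    by (simp only: fps_series_nth atMost_atLeast0 One_nat_def sum.shift_bounds_cl_Suc_ivl)
  also have "\<dots> = (\<Sum>m\<in>{1..M}. (fps_X ^ m * A m) $ M)"
    by (simp add: sum.cl_ivl_Suc fps_X_power_mult_nth del: power_Suc)
  finally show ?thesis .
qed

lemma fps_X_power_Suc_mult_nth_eq_0: "n \<le> m \<Longrightarrow> (fps_X ^ Suc m * A) $ n = 0"
  by (simp add: fps_X_power_mult_nth del: power_Suc)

lemma card_partitions_perim_gf:
  "Abs_fps (\<lambda>M. of_nat (card {p \<in> partitions_perim M. P p}))
     = fps_series (\<lambda>j. fps_X ^ Suc j * size_gf (below_max P (Suc j)) :: 'a::comm_semiring_1 fps)"
proof (rule fps_ext)
  fix M
  have "Abs_fps (\<lambda>M. of_nat (card {p \<in> partitions_perim M. P p}) :: 'a) $ M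
      = (\<Sum>m\<in>{1..M}. of_nat (card {q \<in> below_max P m. size q = M - m}))"
    using sum_partitions_perim_size[where P = P and w = "\<lambda>_. 1"] by (simp add: of_nat_sum)
  also have "\<dots> = (\<Sum>m\<in>{1..M}. (fps_X ^ m * size_gf (below_max P m)) $ M)"
    by (rule sum.cong) (simp_all add: fps_X_power_mult_nth size_gf_def)
  also have "\<dots> = fps_series (\<lambda>j. fps_X ^ Suc j * size_gf (below_max P (Suc j))) $ M"
    by (rule fps_series_X_power_nth[symmetric])
  finally show "Abs_fps (\<lambda>M. of_nat (card {p \<in> partitions_perim M. P p})) $ M
      = fps_series (\<lambda>j. fps_X ^ Suc j * size_gf (below_max P (Suc j)) :: 'a fps) $ M" .
qed

lemma size_partitions_perim_gf:
  "Abs_fps (\<lambda>M. of_nat (\<Sum>p\<in>{p \<in> partitions_perim M. P p}. size p))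
     = fps_series (\<lambda>j. fps_X ^ Suc j * (size_gf (below_max P (Suc j))
          + fps_X * fps_deriv (size_gf (below_max P (Suc j)))) :: 'a::comm_ring_1 fps)"
proof (rule fps_ext)
  fix M
  have "Abs_fps (\<lambda>M. of_nat (\<Sum>p\<in>{p \<in> partitions_perim M. P p}. size p) :: 'a) $ M
      = (\<Sum>m\<in>{1..M}. of_nat (Suc (M - m) * card {q \<in> below_max P m. size q = M - m}))"
    using sum_partitions_perim_size[where P = P and w = "\<lambda>x. x"]
    by (simp only: fps_nth_Abs_fps of_nat_sum)
  also have "\<dots> = (\<Sum>m\<in>{1..M}. (fps_X ^ m * (size_gf (below_max P m)
      + fps_X * fps_deriv (size_gf (below_max P m)))) $ M)"
  proof (rule sum.cong)
    fix m assume "m \<in> {1..M}"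
    then obtain n where "M = m + n" using le_Suc_ex by auto
    then show "(of_nat (Suc (M - m) * card {q \<in> below_max P m. size q = M - m}) :: 'a)
      = (fps_X ^ m * (size_gf (below_max P m) + fps_X * fps_deriv (size_gf (below_max P m)))) $ M"
      by (cases n) (auto simp: fps_X_power_mult_nth size_gf_def algebra_simps)
  qed simp
  also have "\<dots> = fps_series (\<lambda>j. fps_X ^ Suc j * (size_gf (below_max P (Suc j))
      + fps_X * fps_deriv (size_gf (below_max P (Suc j))))) $ M"
    by (rule fps_series_X_power_nth[symmetric])
  finally show "Abs_fps (\<lambda>M. of_nat (\<Sum>p\<in>{p \<in> partitions_perim M. P p}. size p)) $ M
      = fps_series (\<lambda>j. fps_X ^ Suc j * (size_gf (below_max P (Suc j))
          + fps_X * fps_deriv (size_gf (below_max P (Suc j)))) :: 'a fps) $ M" .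
qed

lemma one_minus_X_minus_X2_eq:
  "1 - fps_X - fps_X ^ 2 = (1 - fps_X ^ 2 * ones_fps) * (1 - fps_X :: 'a::comm_ring_1 fps)"
proof -
  have "(1 - fps_X ^ 2 * ones_fps) * (1 - fps_X :: 'a fps)
      = 1 - fps_X - fps_X ^ 2 * (ones_fps * (1 - fps_X))"
    by (simp add: algebra_simps)
  then show ?thesis by (simp add: ones_fps_times_one_minus_X)
qed

lemma eq_divide_one_minus_X_minus_X2_squared:
  fixes S N :: "'a::field fps"
  assumes "S * (1 - fps_X - fps_X ^ 2) ^ 2 = N"
  shows "S = N / (1 - fps_X - fps_X ^ 2) ^ 2"
proof -
  have "(1 - fps_X - fps_X ^ 2) ^ 2 dvd (1 :: 'a fps)"
    by (simp add: power2_eq_square fps_mult_nth)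
  with assms show ?thesis by (simp add: unit_eq_div2)
qed

lemma of_nat_mult_power_one_plus_X_pred:
  "of_nat j * (1 + fps_X) ^ (j - 1)
    = of_nat j * (1 + fps_X) ^ j * inverse (1 + fps_X :: 'a::field fps)"
proof (cases j)
  case (Suc i)
  have "(1 + fps_X) * inverse (1 + fps_X :: 'a fps) = 1"
    by (simp add: inverse_mult_eq_1')
  then show ?thesis by (simp add: Suc mult_ac)
qed simp

lemma fps_deriv_power_one_plus_X:
  "fps_deriv ((1 + fps_X) ^ j) = of_nat j * (1 + fps_X) ^ j * inverse (1 + fps_X :: 'a::field fps)"
  by (simp add: fps_deriv_power' flip: of_nat_mult_power_one_plus_X_pred)

section \<open>The four classes of partitions\<close>

abbreviation odd_parts :: "nat multiset \<Rightarrow> bool" where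
  "odd_parts p \<equiv> \<forall>x\<in>#p. odd x"

abbreviation distinct_parts :: "nat multiset \<Rightarrow> bool" where
  "distinct_parts p \<equiv> \<forall>x\<in>#p. count p x = 1"

abbreviation single_even_value :: "nat multiset \<Rightarrow> bool" where
  "single_even_value p \<equiv> card {x \<in> set_mset p. even x} = 1"

abbreviation single_repeated_value :: "nat multiset \<Rightarrow> bool" where
  "single_repeated_value p \<equiv> card {x \<in> set_mset p. 2 \<le> count p x} = 1"

lemma below_max_odd_parts_even: "even m \<Longrightarrow> below_max odd_parts m = {}"
  by (auto simp: below_max_def)

lemma below_max_odd_parts_odd:
  assumes "odd m"
  shows "below_max odd_parts m = msets_with_mult (\<lambda>v. if odd v then UNIV else {0}) m"
proof (intro set_eqI)
  fix q
  show "q \<in> below_max odd_parts m \<longleftrightarrow> q \<in> msets_with_mult (\<lambda>v. if odd v then UNIV else {0}) m"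
    unfolding below_max_def mem_msets_with_mult mem_Collect_eq using assms
    by (auto simp: Suc_le_eq count_eq_zero_iff)
qed

lemma size_gf_below_max_odd_parts:
  assumes "odd m"
  shows "size_gf (below_max odd_parts m) = (ones_fps ^ ((m + 1) div 2) :: 'a::comm_semiring_1 fps)"
proof -
  have "size_gf (below_max odd_parts m)
      = (\<Prod>v\<in>{1..m}. indicator_fps (if odd v then UNIV else {0}) :: 'a fps)"
    unfolding below_max_odd_parts_odd[OF assms] by (rule size_gf_msets_with_mult)
  also have "\<dots> = (\<Prod>v\<in>{1..m}. if odd v then ones_fps else 1)"
    by (rule prod.cong) (simp_all add: indicator_fps_UNIV indicator_fps_0)
  finally show ?thesis unfolding prod_if_odd .
qed

theorem g_gf:
  "Abs_fps (\<lambda>M. of_nat (g M) :: rat) = (fps_X - fps_X ^ 3) / (1 - fps_X - fps_X ^ 2) ^ 2"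
proof -
  define S where "S = Abs_fps (\<lambda>M. of_nat (g M) :: rat)"
  define G where "G m = (size_gf (below_max odd_parts m) :: rat fps)" for m
  define u :: "rat fps" where "u = fps_X ^ 2 * ones_fps"
  have u0: "u $ 0 = 0" by (simp add: u_def)
  \<comment> \<open>Summand \<open>j\<close> belongs to the largest part \<open>j + 1\<close>; the two parities together give a
    series in \<open>u\<close>.\<close>
  have pair: "fps_X ^ Suc (2 * k) * (G (Suc (2 * k)) + fps_X * fps_deriv (G (Suc (2 * k))))
      + fps_X ^ Suc (2 * k + 1) * (G (Suc (2 * k + 1)) + fps_X * fps_deriv (G (Suc (2 * k + 1))))
      = u ^ k * (fps_X * ones_fps) + of_nat (Suc k) * (u ^ k * (u * ones_fps))" for k
  proof -
    have G: "G (Suc (2 * k)) = ones_fps ^ Suc k" "G (Suc (2 * k + 1)) = 0"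
      using size_gf_below_max_odd_parts[of "Suc (2 * k)"]
        below_max_odd_parts_even[of "Suc (2 * k + 1)"]
      by (simp_all add: G_def size_gf_empty)
    have deriv:
      "fps_deriv (ones_fps ^ Suc k) = of_nat (Suc k) * ones_fps ^ 2 * (ones_fps ^ k :: rat fps)"
      by (subst fps_deriv_power') (simp add: fps_deriv_ones_fps)
    have X: "fps_X ^ Suc (2 * k) = (fps_X ^ 2) ^ k * (fps_X :: rat fps)"
      "fps_X ^ Suc (2 * k + 1) = (fps_X ^ 2) ^ k * (fps_X ^ 2 :: rat fps)"
      by (simp_all only: power_mult power_add power_Suc) (simp_all add: power2_eq_square mult_ac)
    show ?thesis
      unfolding G deriv X fps_deriv_0
      unfolding u_def power_mult_distrib power_Suc of_nat_Suc by algebra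
  qed
  have "S = fps_series (\<lambda>j. fps_X ^ Suc j * (G (Suc j) + fps_X * fps_deriv (G (Suc j))))"
    unfolding S_def g_def G_set_def G_def by (rule size_partitions_perim_gf)
  also have "\<dots> = fps_series (\<lambda>k. u ^ k * (fps_X * ones_fps)
      + of_nat (Suc k) * (u ^ k * (u * ones_fps)))"
    by (subst fps_series_pairs) (simp_all only: fps_X_power_Suc_mult_nth_eq_0 less_imp_le pair)
  finally have "S * (1 - u) ^ 2 = fps_X * ones_fps * (1 - u) + u * ones_fps"
    by (simp only: fps_series_geometric_affine[OF u0])
  then have "S * (1 - fps_X - fps_X ^ 2) ^ 2
      = (fps_X * ones_fps * (1 - u) + u * ones_fps) * (1 - fps_X) ^ 2"
    by (simp add: one_minus_X_minus_X2_eq u_def power_mult_distrib mult.assoc)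
  also have "\<dots> = fps_X - fps_X ^ 3"
    unfolding u_def using ones_fps_times_one_minus_X[where 'a = rat] by algebra
  finally show ?thesis
    unfolding S_def by (rule eq_divide_one_minus_X_minus_X2_squared)
qed

lemma below_max_distinct_parts:
  assumes "0 < m"
  shows "below_max distinct_parts m = msets_with_mult (\<lambda>v. if v = m then {0} else {0, 1}) m"
proof (intro set_eqI)
  fix q
  show "q \<in> below_max distinct_parts m \<longleftrightarrow> q \<in> msets_with_mult (\<lambda>v. if v = m then {0} else {0, 1}) m"
    unfolding below_max_def mem_msets_with_mult mem_Collect_eq using assms
    by (auto simp: Suc_le_eq count_eq_zero_iff)
qed

lemma size_gf_below_max_distinct_parts:
  "size_gf (below_max distinct_parts (Suc n)) = ((1 + fps_X) ^ n :: 'a::comm_semiring_1 fps)"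
proof -
  have "size_gf (below_max distinct_parts (Suc n))
      = (\<Prod>v\<in>{1..Suc n}. indicator_fps (if v = Suc n then {0} else {0, 1}) :: 'a fps)"
    unfolding below_max_distinct_parts[OF zero_less_Suc] by (rule size_gf_msets_with_mult)
  also have "\<dots> = indicator_fps {0} * (\<Prod>v\<in>{1..n}. indicator_fps (if v = Suc n then {0} else {0, 1}))"
    by (subst prod.nat_ivl_Suc') simp_all
  also have "(\<Prod>v\<in>{1..n}. indicator_fps (if v = Suc n then {0} else {0, 1}))
      = (\<Prod>v\<in>{1..n}. 1 + fps_X :: 'a fps)"
    by (rule prod.cong) (simp_all add: indicator_fps_01 del: One_nat_def)
  finally show ?thesis by (simp add: indicator_fps_0)
qed

theorem h_gf:
  "Abs_fps (\<lambda>M. of_nat (h M) :: rat) = (fps_X - fps_X ^ 2) / (1 - fps_X - fps_X ^ 2) ^ 2"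
proof -
  define S where "S = Abs_fps (\<lambda>M. of_nat (h M) :: rat)"
  define G where "G m = (size_gf (below_max distinct_parts m) :: rat fps)" for m
  \<comment> \<open>Writing \<open>(1 + x)\<^sup>j\<^sup>-\<^sup>1\<close> as \<open>(1 + x)\<^sup>j R\<close> makes every summand \<open>u\<^sup>j\<close> times a fixed series.\<close>
  define R :: "rat fps" where "R = inverse (1 + fps_X)"
  define u :: "rat fps" where "u = fps_X * (1 + fps_X)"
  have u0: "u $ 0 = 0" by (simp add: u_def)
  have R: "R * (1 + fps_X) = 1"
    by (simp add: R_def inverse_mult_eq_1)
  have summand: "fps_X ^ Suc j * (G (Suc j) + fps_X * fps_deriv (G (Suc j)))
      = u ^ j * (fps_X - fps_X ^ 2 * R) + of_nat (Suc j) * (u ^ j * (fps_X ^ 2 * R))" for j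
    unfolding G_def size_gf_below_max_distinct_parts fps_deriv_power_one_plus_X R_def[symmetric]
    unfolding u_def power_mult_distrib power_Suc of_nat_Suc by algebra
  have "S = fps_series (\<lambda>j. fps_X ^ Suc j * (G (Suc j) + fps_X * fps_deriv (G (Suc j))))"
    unfolding S_def h_def H_set_def G_def by (rule size_partitions_perim_gf)
  then have "S * (1 - u) ^ 2 = (fps_X - fps_X ^ 2 * R) * (1 - u) + fps_X ^ 2 * R"
    by (simp only: summand fps_series_geometric_affine[OF u0])
  then have "S * (1 - fps_X - fps_X ^ 2) ^ 2 = fps_X - fps_X ^ 2"
    unfolding u_def using R by algebra
  then show ?thesis
    unfolding S_def by (rule eq_divide_one_minus_X_minus_X2_squared)
qed

lemma below_max_single_even_value_even:
  assumes "even m" "0 < m"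
  shows "below_max single_even_value m
    = msets_with_mult (\<lambda>v. if odd v \<or> v = m then UNIV else {0}) m"
proof (intro set_eqI)
  fix q
  have "{x \<in> set_mset (add_mset m q). even x} = insert m {x \<in> set_mset q. even x}"
    using assms by auto
  then have "card {x \<in> set_mset (add_mset m q). even x} = 1 \<longleftrightarrow> (\<forall>x\<in>#q. even x \<longrightarrow> x = m)"
    by (auto simp: card_1_singleton_iff)
  then show "q \<in> below_max single_even_value m
      \<longleftrightarrow> q \<in> msets_with_mult (\<lambda>v. if odd v \<or> v = m then UNIV else {0}) m"
    unfolding below_max_def mem_msets_with_mult mem_Collect_eq using assms
    by (auto simp: Suc_le_eq count_eq_zero_iff)
qed

lemma below_max_single_even_value_odd:
  assumes "odd m"
  shows "below_max single_even_value m
    = (\<Union>e\<in>{e \<in> {1..m}. even e}.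
        msets_with_mult (\<lambda>v. if v = e then {c. 1 \<le> c} else if odd v then UNIV else {0}) m)"
    (is "_ = (\<Union>e\<in>_. msets_with_mult (?F e) m)")
proof (intro set_eqI)
  fix q
  have "{x \<in> set_mset (add_mset m q). even x} = {x \<in> set_mset q. even x}"
    using assms by auto
  then have "q \<in> below_max single_even_value m
      \<longleftrightarrow> (\<forall>v\<in>#q. 0 < v \<and> v \<le> m) \<and> (\<exists>e. {x \<in> set_mset q. even x} = {e})"
    by (simp add: below_max_def card_1_singleton_iff)
  also have "\<dots> \<longleftrightarrow> (\<exists>e\<in>{e \<in> {1..m}. even e}. q \<in> msets_with_mult (?F e) m)"
  proof
    assume "(\<forall>v\<in>#q. 0 < v \<and> v \<le> m) \<and> (\<exists>e. {x \<in> set_mset q. even x} = {e})"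
    then obtain e where q: "\<forall>v\<in>#q. 0 < v \<and> v \<le> m" and e: "{x \<in> set_mset q. even x} = {e}"
      by blast
    have "e \<in># q" "even e" using e by blast+
    have "count q v \<in> ?F e v" for v
      using e by (cases "v = e") (auto simp: count_eq_zero_iff)
    with q have "q \<in> msets_with_mult (?F e) m"
      by (auto simp: mem_msets_with_mult Suc_le_eq)
    moreover have "e \<in> {e \<in> {1..m}. even e}"
      using q \<open>e \<in># q\<close> \<open>even e\<close> by force
    ultimately show "\<exists>e\<in>{e \<in> {1..m}. even e}. q \<in> msets_with_mult (?F e) m" by blast
  next
    assume "\<exists>e\<in>{e \<in> {1..m}. even e}. q \<in> msets_with_mult (?F e) m"
    then obtain e where e: "e \<in> {1..m}" "even e" and q: "q \<in> msets_with_mult (?F e) m"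
      by blast
    have bounds: "\<forall>v\<in>#q. 0 < v \<and> v \<le> m" and count: "\<And>v. v \<in> {1..m} \<Longrightarrow> count q v \<in> ?F e v"
      using q by (auto simp: mem_msets_with_mult)
    have "v \<in># q \<longleftrightarrow> v = e" if "even v" for v
      using count[of v] bounds that e
      by (cases "v \<in> {1..m}") (auto simp: count_eq_zero_iff split: if_split_asm)
    then have "{x \<in> set_mset q. even x} = {e}" using e(2) by blast
    with bounds show "(\<forall>v\<in>#q. 0 < v \<and> v \<le> m) \<and> (\<exists>e. {x \<in> set_mset q. even x} = {e})"
      by blast
  qed
  finally show "q \<in> below_max single_even_value m
      \<longleftrightarrow> q \<in> (\<Union>e\<in>{e \<in> {1..m}. even e}. msets_with_mult (?F e) m)"
    by blast
qed

lemma size_gf_below_max_single_even_value_even: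
  assumes "even m" "0 < m"
  shows "size_gf (below_max single_even_value m)
     = (ones_fps ^ (m div 2 + 1) :: 'a::comm_semiring_1 fps)"
proof -
  obtain n where m: "m = Suc n" using assms(2) gr0_implies_Suc by blast
  have "size_gf (below_max single_even_value m)
      = (\<Prod>v\<in>{1..m}. indicator_fps (if odd v \<or> v = m then UNIV else {0}) :: 'a fps)"
    unfolding below_max_single_even_value_even[OF assms] by (rule size_gf_msets_with_mult)
  also have "\<dots> = ones_fps * (\<Prod>v\<in>{1..n}. indicator_fps (if odd v \<or> v = m then UNIV else {0}))"
    unfolding m by (subst prod.nat_ivl_Suc') (simp_all add: indicator_fps_UNIV)
  also have "(\<Prod>v\<in>{1..n}. indicator_fps (if odd v \<or> v = m then UNIV else {0}))
      = (\<Prod>v\<in>{1..n}. if odd v then ones_fps else (1 :: 'a fps))"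
    by (rule prod.cong) (simp_all add: m indicator_fps_UNIV indicator_fps_0)
  finally show ?thesis
    using assms(1) unfolding prod_if_odd m by simp
qed

lemma size_gf_msets_with_single_even_value:
  assumes "e \<in> {1..m}" "even e"
  shows "size_gf (msets_with_mult (\<lambda>v. if v = e then {c. 1 \<le> c} else if odd v then UNIV else {0}) m)
    = fps_X * ones_fps * (ones_fps ^ ((m + 1) div 2) :: 'a::comm_semiring_1 fps)"
    (is "size_gf (msets_with_mult ?F m) = _")
proof -
  let ?f = "\<lambda>v. if odd v then ones_fps else (1 :: 'a fps)"
  have "size_gf (msets_with_mult ?F m) = (\<Prod>v\<in>{1..m}. indicator_fps (?F v) :: 'a fps)"
    by (rule size_gf_msets_with_mult)
  also have "\<dots> = indicator_fps {c. 1 \<le> c} * (\<Prod>v\<in>{1..m} - {e}. indicator_fps (?F v))"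
    using assms by (simp add: prod.remove)
  also have "(\<Prod>v\<in>{1..m} - {e}. indicator_fps (?F v)) = (\<Prod>v\<in>{1..m} - {e}. ?f v)"
    by (rule prod.cong) (simp_all add: indicator_fps_UNIV indicator_fps_0)
  also have "\<dots> = (\<Prod>v\<in>{1..m}. ?f v)"
    using assms by (simp add: prod.remove)
  finally show ?thesis
    unfolding prod_if_odd indicator_fps_atLeast by simp
qed

lemma size_gf_below_max_single_even_value_odd:
  "size_gf (below_max single_even_value (2 * k + 1))
     = of_nat k * (fps_X * ones_fps * ones_fps ^ Suc k :: 'a::comm_semiring_1 fps)"
proof -
  let ?F = "\<lambda>e v. if v = e then {c. 1 \<le> c} else if odd v then UNIV else {0}"
  have odd_2k1: "odd (2 * k + 1)" by simp
  have "size_gf (below_max single_even_value (2 * k + 1))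
      = (\<Sum>e\<in>{e \<in> {1..2 * k + 1}. even e}. size_gf (msets_with_mult (?F e) (2 * k + 1)) :: 'a fps)"
    unfolding below_max_single_even_value_odd[OF odd_2k1]
  proof (rule size_gf_UN_disjoint)
    fix i j assume ij: "i \<in> {e \<in> {1..2 * k + 1}. even e}" "j \<in> {e \<in> {1..2 * k + 1}. even e}" "i \<noteq> j"
    show "msets_with_mult (?F i) (2 * k + 1) \<inter> msets_with_mult (?F j) (2 * k + 1) = {}"
    proof (rule equals0I)
      fix q assume "q \<in> msets_with_mult (?F i) (2 * k + 1) \<inter> msets_with_mult (?F j) (2 * k + 1)"
      then have "\<forall>v\<in>{1..2 * k + 1}. count q v \<in> ?F i v" "\<forall>v\<in>{1..2 * k + 1}. count q v \<in> ?F j v"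
        unfolding Int_iff mem_msets_with_mult by blast+
      then have "count q i \<in> ?F i i" "count q i \<in> ?F j i"
        using ij(1) by blast+
      then show False using ij by (auto simp: count_eq_zero_iff)
    qed
  qed (simp_all add: finite_msets_with_mult_size)
  also have "\<dots> = (\<Sum>e\<in>{e \<in> {1..2 * k + 1}. even e}. fps_X * ones_fps * ones_fps ^ Suc k)"
    by (rule sum.cong) (simp_all add: size_gf_msets_with_single_even_value)
  finally show ?thesis by (simp only: sum_constant card_even_atLeastAtMost_odd)
qed

theorem g1_gf: "Abs_fps (\<lambda>M. of_nat (g1 M) :: rat) = fps_X ^ 2 / (1 - fps_X - fps_X ^ 2) ^ 2"
proof -
  define S where "S = Abs_fps (\<lambda>M. of_nat (g1 M) :: rat)"
  define G where "G m = (size_gf (below_max single_even_value m) :: rat fps)" for m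
  define u :: "rat fps" where "u = fps_X ^ 2 * ones_fps"
  have u0: "u $ 0 = 0" by (simp add: u_def)
  have pair: "fps_X ^ Suc (2 * k) * G (Suc (2 * k)) + fps_X ^ Suc (2 * k + 1) * G (Suc (2 * k + 1))
      = of_nat (Suc k) * (u ^ k * (u * ones_fps))" for k
  proof -
    have G: "G (Suc (2 * k)) = of_nat k * (fps_X * ones_fps * ones_fps ^ Suc k)"
      "G (Suc (2 * k + 1)) = ones_fps ^ (k + 2)"
      using size_gf_below_max_single_even_value_odd[of k]
        size_gf_below_max_single_even_value_even[of "Suc (2 * k + 1)"]
      by (simp_all add: G_def)
    have X: "fps_X ^ Suc (2 * k) = (fps_X ^ 2) ^ k * (fps_X :: rat fps)"
      "fps_X ^ Suc (2 * k + 1) = (fps_X ^ 2) ^ k * (fps_X ^ 2 :: rat fps)"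
      by (simp_all only: power_mult power_add power_Suc) (simp_all add: power2_eq_square mult_ac)
    show ?thesis
      unfolding G X u_def power_mult_distrib power_add power_one_right of_nat_Suc
      by (simp add: algebra_simps power2_eq_square)
  qed
  have "S = fps_series (\<lambda>j. fps_X ^ Suc j * G (Suc j))"
    unfolding S_def g1_def G1_set_def G_def by (rule card_partitions_perim_gf)
  also have "\<dots> = fps_series (\<lambda>k. of_nat (Suc k) * (u ^ k * (u * ones_fps)))"
    by (subst fps_series_pairs) (simp_all only: fps_X_power_Suc_mult_nth_eq_0 less_imp_le pair)
  finally have "S * (1 - u) ^ 2 = u * ones_fps"
    using fps_series_geometric_deriv[OF u0] by simp
  then have "S * (1 - fps_X - fps_X ^ 2) ^ 2 = u * ones_fps * (1 - fps_X) ^ 2"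
    by (simp add: one_minus_X_minus_X2_eq u_def power_mult_distrib mult.assoc)
  also have "\<dots> = fps_X ^ 2"
    unfolding u_def using ones_fps_times_one_minus_X[where 'a = rat] by algebra
  finally show ?thesis
    unfolding S_def by (rule eq_divide_one_minus_X_minus_X2_squared)
qed

text \<open>\<open>c + of_bool (v = m)\<close> is the multiplicity of \<open>v\<close> once the largest part \<open>m\<close> is put back.\<close>

lemma below_max_single_repeated_value:
  assumes "0 < m"
  shows "below_max single_repeated_value m
    = (\<Union>r\<in>{1..m}. msets_with_mult (\<lambda>v. {c. 2 \<le> c + of_bool (v = m) \<longleftrightarrow> v = r}) m)"
    (is "_ = (\<Union>r\<in>_. msets_with_mult (?F r) m)")
proof (intro set_eqI)
  fix q
  have repeated: "{x \<in> set_mset (add_mset m q). 2 \<le> count (add_mset m q) x}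
      = {x. 2 \<le> count q x + of_bool (x = m)}"
    by (auto simp flip: count_greater_zero_iff)
  have "q \<in> below_max single_repeated_value m
      \<longleftrightarrow> (\<forall>v\<in>#q. 0 < v \<and> v \<le> m) \<and> (\<exists>r. {x. 2 \<le> count q x + of_bool (x = m)} = {r})"
    by (simp only: below_max_def mem_Collect_eq repeated One_nat_def card_1_singleton_iff)
  also have "\<dots> \<longleftrightarrow> (\<exists>r\<in>{1..m}. q \<in> msets_with_mult (?F r) m)"
  proof
    assume "(\<forall>v\<in>#q. 0 < v \<and> v \<le> m) \<and> (\<exists>r. {x. 2 \<le> count q x + of_bool (x = m)} = {r})"
    then obtain r where q: "\<forall>v\<in>#q. 0 < v \<and> v \<le> m"
      and r: "{x. 2 \<le> count q x + of_bool (x = m)} = {r}"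
      by blast
    have "2 \<le> count q r + of_bool (r = m)" using r by blast
    then have "r = m \<or> r \<in># q" by (cases "r = m") (auto simp flip: count_greater_zero_iff)
    then have "r \<in> {1..m}" using q assms by auto
    moreover have "q \<in> msets_with_mult (?F r) m"
      using q r by (auto simp: mem_msets_with_mult Suc_le_eq set_eq_iff)
    ultimately show "\<exists>r\<in>{1..m}. q \<in> msets_with_mult (?F r) m" by blast
  next
    assume "\<exists>r\<in>{1..m}. q \<in> msets_with_mult (?F r) m"
    then obtain r where r: "r \<in> {1..m}" and q: "q \<in> msets_with_mult (?F r) m" by blast
    have bounds: "\<forall>v\<in>#q. 0 < v \<and> v \<le> m" and count: "\<And>v. v \<in> {1..m} \<Longrightarrow> count q v \<in> ?F r v"
      using q by (auto simp: mem_msets_with_mult)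
    have outside: "count q v = 0" if "v \<notin> {1..m}" for v
      using bounds that by (auto simp: count_eq_zero_iff)
    have "2 \<le> count q v + of_bool (v = m) \<longleftrightarrow> v = r" for v
      using count[of v] outside[of v] r assms by (cases "v \<in> {1..m}") auto
    with bounds show "(\<forall>v\<in>#q. 0 < v \<and> v \<le> m) \<and> (\<exists>r. {x. 2 \<le> count q x + of_bool (x = m)} = {r})"
      by blast
  qed
  finally show "q \<in> below_max single_repeated_value m
      \<longleftrightarrow> q \<in> (\<Union>r\<in>{1..m}. msets_with_mult (?F r) m)"
    by blast
qed

lemma size_gf_msets_with_repeated_max:
  "size_gf (msets_with_mult (\<lambda>v. {c. 2 \<le> c + of_bool (v = Suc n) \<longleftrightarrow> v = Suc n}) (Suc n))
    = fps_X * ones_fps * ((1 + fps_X) ^ n :: 'a::comm_semiring_1 fps)"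
proof -
  have "size_gf (msets_with_mult (\<lambda>v. {c. 2 \<le> c + of_bool (v = Suc n) \<longleftrightarrow> v = Suc n}) (Suc n))
      = indicator_fps {c. 1 \<le> c}
        * (\<Prod>v\<in>{1..n}. indicator_fps {c. 2 \<le> c + of_bool (v = Suc n) \<longleftrightarrow> v = Suc n} :: 'a fps)"
    by (simp add: size_gf_msets_with_mult prod.nat_ivl_Suc' Suc_le_eq mult.commute)
  also have "(\<Prod>v\<in>{1..n}. indicator_fps {c. 2 \<le> c + of_bool (v = Suc n) \<longleftrightarrow> v = Suc n})
      = (\<Prod>v\<in>{1..n}. 1 + fps_X :: 'a fps)"
  proof (rule prod.cong)
    fix v assume "v \<in> {1..n}"
    then have "{c. 2 \<le> c + of_bool (v = Suc n) \<longleftrightarrow> v = Suc n} = {0, 1 :: nat}" by auto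
    then show "indicator_fps {c. 2 \<le> c + of_bool (v = Suc n) \<longleftrightarrow> v = Suc n} = (1 + fps_X :: 'a fps)"
      by (simp add: indicator_fps_01 del: One_nat_def)
  qed simp
  finally show ?thesis by (simp add: indicator_fps_atLeast)
qed

lemma size_gf_msets_with_repeated_below_max:
  assumes r: "r \<in> {1..n}"
  shows "size_gf (msets_with_mult (\<lambda>v. {c. 2 \<le> c + of_bool (v = Suc n) \<longleftrightarrow> v = r}) (Suc n))
    = fps_X ^ 2 * ones_fps * ((1 + fps_X) ^ (n - 1) :: 'a::comm_semiring_1 fps)"
proof -
  let ?F = "\<lambda>v. {c :: nat. 2 \<le> c + of_bool (v = Suc n) \<longleftrightarrow> v = r}"
  have F: "?F (Suc n) = {0}" "?F r = {c. 2 \<le> c}"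
    using r by auto
  have F_other: "?F v = {0, 1}" if "v \<in> {1..n} - {r}" for v
    using r that by auto
  have "size_gf (msets_with_mult ?F (Suc n)) = (\<Prod>v\<in>{1..Suc n}. indicator_fps (?F v) :: 'a fps)"
    by (rule size_gf_msets_with_mult)
  also have "\<dots> = indicator_fps (?F (Suc n)) * (\<Prod>v\<in>{1..n}. indicator_fps (?F v))"
    by (rule prod.nat_ivl_Suc') simp
  also have "(\<Prod>v\<in>{1..n}. indicator_fps (?F v))
      = indicator_fps (?F r) * (\<Prod>v\<in>{1..n} - {r}. indicator_fps (?F v))"
    by (rule prod.remove) (use r in auto)
  also have "(\<Prod>v\<in>{1..n} - {r}. indicator_fps (?F v)) = (\<Prod>v\<in>{1..n} - {r}. 1 + fps_X :: 'a fps)"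
    by (rule prod.cong) (simp_all only: F_other indicator_fps_01)
  also have "\<dots> = (1 + fps_X) ^ (n - 1)"
    using r by simp
  finally show ?thesis
    unfolding F indicator_fps_0 indicator_fps_atLeast by (simp add: mult_ac)
qed

lemma size_gf_below_max_single_repeated_value:
  "size_gf (below_max single_repeated_value (Suc n))
    = fps_X * ones_fps * (1 + fps_X) ^ n
      + of_nat n * (fps_X ^ 2 * ones_fps * (1 + fps_X) ^ n * inverse (1 + fps_X :: 'a::field fps))"
proof -
  let ?F = "\<lambda>r v. {c :: nat. 2 \<le> c + of_bool (v = Suc n) \<longleftrightarrow> v = r}"
  have "size_gf (below_max single_repeated_value (Suc n))
      = (\<Sum>r\<in>{1..Suc n}. size_gf (msets_with_mult (?F r) (Suc n)) :: 'a fps)"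
    unfolding below_max_single_repeated_value[OF zero_less_Suc]
  proof (rule size_gf_UN_disjoint)
    fix i j assume ij: "i \<in> {1..Suc n}" "j \<in> {1..Suc n}" "i \<noteq> j"
    show "msets_with_mult (?F i) (Suc n) \<inter> msets_with_mult (?F j) (Suc n) = {}"
    proof (rule equals0I)
      fix q assume "q \<in> msets_with_mult (?F i) (Suc n) \<inter> msets_with_mult (?F j) (Suc n)"
      then have "count q i \<in> ?F i i" "count q i \<in> ?F j i"
        using ij(1) unfolding Int_iff mem_msets_with_mult by blast+
      then show False using ij(3) by simp
    qed
  qed (simp_all add: finite_msets_with_mult_size)
  also have "\<dots> = size_gf (msets_with_mult (?F (Suc n)) (Suc n))
      + (\<Sum>r\<in>{1..n}. size_gf (msets_with_mult (?F r) (Suc n)))"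
    by (rule sum.nat_ivl_Suc') simp
  also have "(\<Sum>r\<in>{1..n}. size_gf (msets_with_mult (?F r) (Suc n)))
      = (\<Sum>r\<in>{1..n}. fps_X ^ 2 * ones_fps * (1 + fps_X :: 'a fps) ^ (n - 1))"
    by (intro sum.cong refl size_gf_msets_with_repeated_below_max)
  also have "\<dots> = fps_X ^ 2 * ones_fps * (of_nat n * (1 + fps_X) ^ (n - 1))"
    by (simp add: mult_ac)
  finally show ?thesis
    unfolding of_nat_mult_power_one_plus_X_pred size_gf_msets_with_repeated_max
    by (simp add: mult_ac)
qed

theorem h1_gf: "Abs_fps (\<lambda>M. of_nat (h1 M) :: rat) = fps_X ^ 2 / (1 - fps_X - fps_X ^ 2) ^ 2"
proof -
  define S where "S = Abs_fps (\<lambda>M. of_nat (h1 M) :: rat)"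
  define G where "G m = (size_gf (below_max single_repeated_value m) :: rat fps)" for m
  define R :: "rat fps" where "R = inverse (1 + fps_X)"
  define u :: "rat fps" where "u = fps_X * (1 + fps_X)"
  have u0: "u $ 0 = 0" by (simp add: u_def)
  have R: "R * (1 + fps_X) = 1"
    by (simp add: R_def inverse_mult_eq_1)
  have summand: "fps_X ^ Suc j * G (Suc j)
      = u ^ j * (fps_X ^ 2 * ones_fps - fps_X ^ 3 * ones_fps * R)
        + of_nat (Suc j) * (u ^ j * (fps_X ^ 3 * ones_fps * R))" for j
    unfolding G_def size_gf_below_max_single_repeated_value R_def[symmetric]
    unfolding u_def power_mult_distrib power_Suc of_nat_Suc
    by (simp add: algebra_simps power2_eq_square power3_eq_cube)
  have "S = fps_series (\<lambda>j. fps_X ^ Suc j * G (Suc j))"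
    unfolding S_def h1_def H1_set_def G_def by (rule card_partitions_perim_gf)
  then have "S * (1 - u) ^ 2
      = (fps_X ^ 2 * ones_fps - fps_X ^ 3 * ones_fps * R) * (1 - u) + fps_X ^ 3 * ones_fps * R"
    by (simp only: summand fps_series_geometric_affine[OF u0])
  then have "S * (1 - fps_X - fps_X ^ 2) ^ 2 = fps_X ^ 2"
    unfolding u_def using R ones_fps_times_one_minus_X[where 'a = rat] by algebra
  then show ?thesis
    unfolding S_def by (rule eq_divide_one_minus_X_minus_X2_squared)
qed

theorem mainTheorem3:
  shows "Abs_fps (\<lambda>M. of_nat (g M) :: rat) = (fps_X - fps_X ^ 3) / (1 - fps_X - fps_X ^ 2) ^ 2
    \<and> Abs_fps (\<lambda>M. of_nat (h M) :: rat) = (fps_X - fps_X ^ 2) / (1 - fps_X - fps_X ^ 2) ^ 2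
    \<and> Abs_fps (\<lambda>M. of_nat (g1 M) :: rat) = fps_X ^ 2 / (1 - fps_X - fps_X ^ 2) ^ 2
    \<and> Abs_fps (\<lambda>M. of_nat (h1 M) :: rat) = fps_X ^ 2 / (1 - fps_X - fps_X ^ 2) ^ 2
    \<and> (\<forall>M\<ge>1. g1 M = h1 M)"
proof -
  have "Abs_fps (\<lambda>M. of_nat (g1 M) :: rat) = Abs_fps (\<lambda>M. of_nat (h1 M))"
    by (simp only: g1_gf h1_gf)
  then have "g1 M = h1 M" for M
    by (simp add: fps_eq_iff)
  then show ?thesis
    using g_gf h_gf g1_gf h1_gf by blast
qed

end
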